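(* Let $(X,d)$, $(\Lambda,d_\Lambda)$ be compact metric spaces, $\tau:\Lambda\times X\to X$ continuous and $q:X\to\mathcal P(\Lambda)$ continuous. Assume: (W1) each $\tau_\lambda$ is $1$-Lipschitz on $X$; (MP1) there are $s>0$ and an integer $M\ge1$ such that $\int_{\Lambda^M}|f(\tau_{\lambda^M}(x))-f(\tau_{\lambda^M}(y))|\,dP^q_{M,x}(\lambda^M)\le s\,d(x,y)$ for all $x,y\in X$ and all $f\in\mathrm{Lip}_1(X)$; (H2) there is $r\ge0$ with $d(\tau(\lambda_1,x),\tau(\lambda_2,x))\le r\,d_\Lambda(\lambda_1,\lambda_2)$ for all $\lambda_1,\lambda_2$, $x$; (H3) there is $t\ge0$ with $d_{MK}(q_x,q_y)\le t\,d(x,y)$ for all $x,y\in X$. Then there exists $c>0$ such that for every $f\in\mathrm{Lip}_1(X)$, the function $B_q^M(f)$ is $c$-Lipschitz on $X$.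
   Context: $\mathcal{P}(Y)$ is the set of Borel probability measures on a compact metric space $Y$, with $d_{MK}(\mu,\nu)=\sup_{f\in \mathrm{Lip}_1(Y)}\{\int f\,d\mu-\int f\,d\nu\}$, $\mathrm{Lip}_1(Y)$ the real $1$-Lipschitz functions on $Y$. $\tau_\lambda(x)=\tau(\lambda,x)$; for $\lambda^j=(\lambda_0,\dots,\lambda_{j-1})$, $\tau_{\lambda^j}=\tau_{\lambda_{j-1}}\circ\cdots\circ\tau_{\lambda_0}$. $P^q_{M,x}\in\mathcal P(\Lambda^M)$ is given by $dP^q_{M,x}(\lambda_0,\dots,\lambda_{M-1})=dq_{\tau_{\lambda^{M-1}}(x)}(\lambda_{M-1})\cdots dq_{\tau_{\lambda^1}(x)}(\lambda_1)\,dq_x(\lambda_0)$. The transfer operator is $B_q(f)(x)=\int_\Lambda f(\tau(\lambda,x))\,dq_x(\lambda)$, and $B_q^M$ is its $M$-th iterate, so $B_q^M(f)(x)=\int_{\Lambda^M}f(\tau_{\lambda^M}(x))\,dP^q_{M,x}(\lambda^M)$. *)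

theory Defs
  imports "HOL-Probability.Probability"
begin

primrec tau_iter :: "('l \<Rightarrow> 'x \<Rightarrow> 'x) \<Rightarrow> (nat \<Rightarrow> 'l) \<Rightarrow> nat \<Rightarrow> 'x \<Rightarrow> 'x" where
  "tau_iter tau g 0 x = x"
| "tau_iter tau g (Suc j) x = tau (g j) (tau_iter tau g j x)"

text \<open>The path measure P^q_{M,x} on Lambda^M, realised on functions {..<M} -> Lambda
  (extensional, PiM): the j-th coordinate is drawn from q at tau_{lambda^j}(x).\<close>
fun path_measure :: "('x \<Rightarrow> 'l::topological_space measure) \<Rightarrow> ('l \<Rightarrow> 'x \<Rightarrow> 'x) \<Rightarrow> nat \<Rightarrow> 'x
    \<Rightarrow> (nat \<Rightarrow> 'l) measure" where
  "path_measure q tau 0 x = return (PiM {} (\<lambda>_. borel)) (\<lambda>_. undefined)"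
| "path_measure q tau (Suc M) x =
     bind (path_measure q tau M x)
       (\<lambda>g. distr (q (tau_iter tau g M x)) (PiM {..<Suc M} (\<lambda>_. borel)) (\<lambda>a. g(M := a)))"

definition transfer_op :: "('x \<Rightarrow> 'l measure) \<Rightarrow> ('l \<Rightarrow> 'x \<Rightarrow> 'x) \<Rightarrow> ('x \<Rightarrow> real) \<Rightarrow> 'x \<Rightarrow> real" where
  "transfer_op q tau f x = (\<integral>l. f (tau l x) \<partial>(q x))"

definition mk_dist :: "'a::metric_space measure \<Rightarrow> 'a measure \<Rightarrow> real" where
  "mk_dist \<mu> \<nu> = (SUP f \<in> {f :: 'a \<Rightarrow> real. 1-lipschitz_on UNIV f}.
       (\<integral>y. f y \<partial>\<mu>) - (\<integral>y. f y \<partial>\<nu>))"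

definition borel_prob :: "'a::topological_space measure \<Rightarrow> bool" where
  "borel_prob \<mu> \<longleftrightarrow> prob_space \<mu> \<and> sets \<mu> = sets borel"

end

theory Submission
  imports Defs
begin

text \<open>One application of \<open>B\<^sub>q\<close> multiplies Lipschitz constants by at most \<open>1 + r t\<close>:
  for an \<open>L\<close>-Lipschitz \<open>g\<close>, the difference \<open>B\<^sub>q g x - B\<^sub>q g y\<close> splits into the change of the
  integrand, \<open>\<integral> g(\<tau>\<^sub>\<lambda> x) - g(\<tau>\<^sub>\<lambda> y) dq\<^sub>x \<le> L d(x,y)\<close> by (W1), and the change of the measure,
  which is at most \<open>L r d\<^sub>M\<^sub>K(q\<^sub>x, q\<^sub>y) \<le> L r t d(x,y)\<close> because \<open>\<lambda> \<mapsto> g(\<tau>\<^sub>\<lambda> y)\<close> is \<open>L r\<close>-Lipschitz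
  by (H2).  Iterating gives \<open>c = (1 + r t)\<^sup>M\<close>.\<close>

lemma real_lipschitz_onI:
  fixes f :: "'a::metric_space \<Rightarrow> real"
  assumes "\<And>x y. x \<in> U \<Longrightarrow> y \<in> U \<Longrightarrow> f x - f y \<le> C * dist x y" and "C \<ge> 0"
  shows "C-lipschitz_on U f"
proof (rule lipschitz_onI)
  fix x y assume "x \<in> U" "y \<in> U"
  then show "dist (f x) (f y) \<le> C * dist x y"
    using assms(1)[of x y] assms(1)[of y x] by (simp add: dist_real_def dist_commute abs_le_iff)
qed (fact assms(2))

lemma borel_prob_integrable_continuous:
  fixes h :: "'l::metric_space \<Rightarrow> real"
  assumes "borel_prob \<mu>" "compact (UNIV :: 'l set)" "continuous_on UNIV h"
  shows "integrable \<mu> h"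
proof -
  interpret prob_space \<mu> using assms(1) by (simp add: borel_prob_def)
  have "bounded (range h)"
    by (rule compact_imp_bounded[OF compact_continuous_image[OF assms(3,2)]])
  then obtain B where "\<And>l. norm (h l) \<le> B" unfolding bounded_iff by blast
  then have "AE l in \<mu>. norm (h l) \<le> B" by (rule AE_I2)
  moreover have "sets \<mu> = sets borel" using assms(1) by (simp add: borel_prob_def)
  then have "h \<in> borel_measurable \<mu>"
    using borel_measurable_continuous_onI[OF assms(3)] by (subst measurable_cong_sets[OF _ refl])
  ultimately show ?thesis by (rule integrable_const_bound)
qed

lemma integral_diff_le_mk_dist:
  fixes h :: "'l::metric_space \<Rightarrow> real"
  assumes \<mu>: "borel_prob \<mu>" and \<nu>: "borel_prob \<nu>" and compact: "compact (UNIV :: 'l set)"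
    and h: "1-lipschitz_on UNIV h"
  shows "(\<integral>l. h l \<partial>\<mu>) - (\<integral>l. h l \<partial>\<nu>) \<le> mk_dist \<mu> \<nu>"
proof -
  define D where "D = diameter (UNIV :: 'l set)"
  have gap_bound: "(\<integral>l. f l \<partial>\<mu>) - (\<integral>l. f l \<partial>\<nu>) \<le> 2 * D"
    if f: "1-lipschitz_on UNIV f" for f :: "'l \<Rightarrow> real"
  proof -
    interpret \<mu>: prob_space \<mu> using \<mu> by (simp add: borel_prob_def)
    interpret \<nu>: prob_space \<nu> using \<nu> by (simp add: borel_prob_def)
    fix a :: 'l
    have "dist (f l) (f a) \<le> D" for l
    proof -
      have "dist (f l) (f a) \<le> dist l a" using lipschitz_onD[OF f, of l a] by simp
      also have "\<dots> \<le> D"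
        unfolding D_def by (rule diameter_bounded_bound[OF compact_imp_bounded[OF compact]]) simp_all
      finally show ?thesis .
    qed
    then have near_a: "f a - D \<le> f l" "f l \<le> f a + D" for l
      using abs_le_iff[of "f l - f a" D] by (auto simp: dist_real_def)
    have "continuous_on UNIV f" by (rule lipschitz_on_continuous_on[OF f])
    then have "integrable \<mu> f" "integrable \<nu> f"
      using borel_prob_integrable_continuous \<mu> \<nu> compact by blast+
    then have "(\<integral>l. f l \<partial>\<mu>) \<le> f a + D" "f a - D \<le> (\<integral>l. f l \<partial>\<nu>)"
      using near_a by (auto intro!: \<mu>.integral_le_const \<nu>.integral_ge_const)
    then show ?thesis by linarith
  qed
  have "bdd_above ((\<lambda>f. (\<integral>l. f l \<partial>\<mu>) - (\<integral>l. f l \<partial>\<nu>))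
      ` {f :: 'l \<Rightarrow> real. 1-lipschitz_on UNIV f})"
    by (rule bdd_aboveI2, rule gap_bound) simp
  then show ?thesis
    unfolding mk_dist_def by (rule cSUP_upper[rotated]) (use h in simp)
qed

lemma lipschitz_integral_diff_le_mk_dist:
  fixes h :: "'l::metric_space \<Rightarrow> real"
  assumes \<mu>: "borel_prob \<mu>" and \<nu>: "borel_prob \<nu>" and compact: "compact (UNIV :: 'l set)"
    and h: "L-lipschitz_on UNIV h"
  shows "(\<integral>l. h l \<partial>\<mu>) - (\<integral>l. h l \<partial>\<nu>) \<le> L * mk_dist \<mu> \<nu>"
proof (cases "L = 0")
  case True
  interpret \<mu>: prob_space \<mu> using \<mu> by (simp add: borel_prob_def)
  interpret \<nu>: prob_space \<nu> using \<nu> by (simp add: borel_prob_def)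
  fix a
  define c where "c = h a"
  have "h l = c" for l
    using lipschitz_onD[OF h, of l a] True unfolding c_def by simp
  then show ?thesis
    using True by (simp add: \<mu>.prob_space \<nu>.prob_space)
next
  case False
  then have "L > 0" using lipschitz_on_nonneg[OF h] by simp
  have "((1 / L) * L)-lipschitz_on UNIV (\<lambda>l. (1 / L) * h l)"
    using h \<open>L > 0\<close> by (intro lipschitz_on_cmult_real_nonneg) auto
  then have "(\<integral>l. (1 / L) * h l \<partial>\<mu>) - (\<integral>l. (1 / L) * h l \<partial>\<nu>) \<le> mk_dist \<mu> \<nu>"
    using \<open>L > 0\<close> by (intro integral_diff_le_mk_dist[OF \<mu> \<nu> compact]) simp
  then show ?thesis
    using \<open>L > 0\<close> by (simp add: field_simps)
qed

locale lipschitz_ifs =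
  fixes tau :: "'l::metric_space \<Rightarrow> 'x::metric_space \<Rightarrow> 'x"
    and q :: "'x \<Rightarrow> 'l measure"
    and r t :: real
  assumes compact_params: "compact (UNIV :: 'l set)"
    and q_prob: "\<And>x. borel_prob (q x)"
    and tau_lipschitz: "\<And>l. 1-lipschitz_on UNIV (tau l)"
    and r_nonneg: "r \<ge> 0"
    and tau_lipschitz_param: "\<And>l1 l2 x. dist (tau l1 x) (tau l2 x) \<le> r * dist l1 l2"
    and t_nonneg: "t \<ge> 0"
    and q_lipschitz: "\<And>x y. mk_dist (q x) (q y) \<le> t * dist x y"
begin

lemma transfer_op_lipschitz:
  assumes g: "L-lipschitz_on UNIV g"
  shows "(L * (1 + r * t))-lipschitz_on UNIV (transfer_op q tau g)"
proof (rule real_lipschitz_onI)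
  have "L \<ge> 0" by (rule lipschitz_on_nonneg[OF g])
  then show "L * (1 + r * t) \<ge> 0" using r_nonneg t_nonneg by simp
  have g_tau: "(L * r)-lipschitz_on UNIV (\<lambda>l. g (tau l x))" for x
  proof -
    have "r-lipschitz_on UNIV (\<lambda>l. tau l x)"
      using tau_lipschitz_param r_nonneg by (intro lipschitz_onI) auto
    then show ?thesis
      by (rule lipschitz_on_compose2[OF _ lipschitz_on_subset[OF g subset_UNIV]])
  qed
  have integrable: "integrable (q z) (\<lambda>l. g (tau l x))" for x z
    by (rule borel_prob_integrable_continuous[OF q_prob compact_params
          lipschitz_on_continuous_on[OF g_tau]])
  fix x y
  interpret prob_space "q x" using q_prob by (simp add: borel_prob_def)
  have integrand: "(\<integral>l. g (tau l x) - g (tau l y) \<partial>q x) \<le> L * dist x y"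
  proof (rule integral_le_const)
    have "g (tau l x) - g (tau l y) \<le> L * dist x y" for l
    proof -
      have "g (tau l x) - g (tau l y) \<le> dist (g (tau l x)) (g (tau l y))"
        by (simp add: dist_real_def)
      also have "\<dots> \<le> L * dist (tau l x) (tau l y)"
        using lipschitz_onD[OF g] by simp
      also have "\<dots> \<le> L * dist x y"
        using lipschitz_onD[OF tau_lipschitz] \<open>L \<ge> 0\<close> by (simp add: mult_left_mono)
      finally show ?thesis .
    qed
    then show "AE l in q x. g (tau l x) - g (tau l y) \<le> L * dist x y" by (rule AE_I2)
  qed (use integrable in simp)
  have "(\<integral>l. g (tau l y) \<partial>q x) - (\<integral>l. g (tau l y) \<partial>q y) \<le> L * r * mk_dist (q x) (q y)"
    by (rule lipschitz_integral_diff_le_mk_dist[OF q_prob q_prob compact_params g_tau])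
  also have "\<dots> \<le> L * r * (t * dist x y)"
    using q_lipschitz \<open>L \<ge> 0\<close> r_nonneg by (simp add: mult_left_mono)
  finally show "transfer_op q tau g x - transfer_op q tau g y \<le> L * (1 + r * t) * dist x y"
    using integrand integrable by (simp add: transfer_op_def algebra_simps)
qed

lemma transfer_op_funpow_lipschitz:
  assumes "L-lipschitz_on UNIV f"
  shows "(L * (1 + r * t) ^ n)-lipschitz_on UNIV ((transfer_op q tau ^^ n) f)"
proof (induction n)
  case 0
  then show ?case using assms by simp
next
  case (Suc n)
  have "(L * (1 + r * t) ^ n * (1 + r * t))-lipschitz_on UNIV
      (transfer_op q tau ((transfer_op q tau ^^ n) f))"
    by (rule transfer_op_lipschitz[OF Suc.IH])
  then show ?case by (simp only: funpow.simps o_apply power_Suc2 mult.assoc)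
qed

end

theorem mainTheorem10:
  fixes tau :: "'l::metric_space \<Rightarrow> 'x::metric_space \<Rightarrow> 'x"
    and q :: "'x \<Rightarrow> 'l measure"
    and s :: real and M :: nat and r :: real and t :: real
  assumes compX: "compact (UNIV :: 'x set)"
    and compL: "compact (UNIV :: 'l set)"
    and tau_cont: "continuous_on UNIV (\<lambda>(l, x). tau l x)"
    and q_prob: "\<And>x. borel_prob (q x)"
    and q_cont: "\<And>h :: 'l \<Rightarrow> real. continuous_on UNIV h \<Longrightarrow>
                   continuous_on UNIV (\<lambda>x. \<integral>l. h l \<partial>(q x))"
    and W1: "\<And>l. 1-lipschitz_on UNIV (tau l)"
    and s_pos: "s > 0" and M_ge: "M \<ge> 1"
    and MP1: "\<And>f x y. 1-lipschitz_on (UNIV :: 'x set) f \<Longrightarrow>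
                (\<integral>g. \<bar>f (tau_iter tau g M x) - f (tau_iter tau g M y)\<bar> \<partial>(path_measure q tau M x))
                  \<le> s * dist x y"
    and r_nonneg: "r \<ge> 0"
    and H2: "\<And>l1 l2 x. dist (tau l1 x) (tau l2 x) \<le> r * dist l1 l2"
    and t_nonneg: "t \<ge> 0"
    and H3: "\<And>x y. mk_dist (q x) (q y) \<le> t * dist x y"
  shows "\<exists>c>0. \<forall>f :: 'x \<Rightarrow> real. 1-lipschitz_on UNIV f \<longrightarrow>
           c-lipschitz_on UNIV ((transfer_op q tau ^^ M) f)"
proof -
  interpret lipschitz_ifs tau q r t
    using compL q_prob W1 r_nonneg H2 t_nonneg H3 by unfold_locales
  have "(1 + r * t) ^ M > 0"
    using r_nonneg t_nonneg by (intro zero_less_power add_pos_nonneg mult_nonneg_nonneg) simp_all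
  moreover have "((1 + r * t) ^ M)-lipschitz_on UNIV ((transfer_op q tau ^^ M) f)"
    if "1-lipschitz_on UNIV f" for f :: "'x \<Rightarrow> real"
    using transfer_op_funpow_lipschitz[OF that] by simp
  ultimately show ?thesis by blast
qed

end
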